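(* Let $N=\begin{pmatrix}0&1&0\\0&0&1\\0&0&0\end{pmatrix}$, $\xi=(x,y,z)^T$, $\beta=2zx-y^2$, and $d\ge1$. The space $\ker(\mathrm{ad}_{N^*})\cap U^3_d$ equals $\{\theta\,\xi:\ \theta=\theta(x,\beta)\in P^3_{d-1}\}$, i.e. the vector fields $\theta\xi$ with $\theta$ a homogeneous degree-$(d-1)$ polynomial in $\xi$ that is a polynomial in $x$ and $\beta$. This space has dimension $\lceil d/2\rceil$.
   Context: $P^3_k$ is the space of real homogeneous polynomials of degree $k$ on $\mathbb{R}^3$; $U^3_d=\{\theta(\xi)\xi:\theta\in P^3_{d-1}\}$. $\mathrm{ad}_A h(\xi)=Dh(\xi)A\xi-Ah(\xi)$, $N^*=N^T$; $\ker\mathrm{ad}_{N^*}$ is the orthogonal complement of $\mathrm{rng}\,\mathrm{ad}_N$ with respect to the inner product $\langle p,q\rangle=\sum_i p_i(\partial_\xi)q_i(\xi)|_{\xi=0}$. *)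

theory Defs
  imports "HOL-Analysis.Analysis" "HOL-Library.Function_Algebras"
begin

text \<open>Coordinates: for xi :: real^3, x = xi$1, y = xi$2, z = xi$3.\<close>

definition hpoly :: "nat \<Rightarrow> (real^3 \<Rightarrow> real) set" where
  "hpoly k = {f. \<exists>c :: nat \<Rightarrow> nat \<Rightarrow> real. \<forall>\<xi>.
      f \<xi> = (\<Sum>(i,j)\<in>{(i,j). i + j \<le> k}.
                c i j * (\<xi>$1)^i * (\<xi>$2)^j * (\<xi>$3)^(k - i - j))}"

definition U3 :: "nat \<Rightarrow> (real^3 \<Rightarrow> real^3) set" where
  "U3 d = {h. \<exists>\<theta>\<in>hpoly (d - 1). h = (\<lambda>\<xi>. \<theta> \<xi> *\<^sub>R \<xi>)}"

definition ad :: "real^3^3 \<Rightarrow> (real^3 \<Rightarrow> real^3) \<Rightarrow> (real^3 \<Rightarrow> real^3)" where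
  "ad A h = (\<lambda>\<xi>. frechet_derivative h (at \<xi>) (A *v \<xi>) - A *v h \<xi>)"

definition Nmat :: "real^3^3" where
  "Nmat = (\<chi> i j. if (i = 1 \<and> j = 2) \<or> (i = 2 \<and> j = 3) then 1 else 0)"

definition beta :: "real^3 \<Rightarrow> real" where
  "beta \<xi> = 2 * (\<xi>$3) * (\<xi>$1) - (\<xi>$2)^2"

definition vf_scale :: "real \<Rightarrow> (real^3 \<Rightarrow> real^3) \<Rightarrow> (real^3 \<Rightarrow> real^3)" where
  "vf_scale c h = (\<lambda>\<xi>. c *\<^sub>R h \<xi>)"

end

theory Submission
  imports Defs
begin

(* ad_{N^T} (\<theta> \<xi>) = (D\<theta>(\<xi>) N^T \<xi>) \<xi>, so the kernel in U^3_d consists of the fields \<theta> \<xi> with \<theta> a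
   first integral of the linear flow \<xi>' = N^T \<xi>, whose orbits are
   t \<mapsto> \<xi> + t N^T \<xi> + t^2/2 (N^T)^2 \<xi>.  Both x and \<beta> are first integrals.  Conversely, for x \<noteq> 0
   the orbit of \<xi> meets the plane y = 0 at (x, 0, \<beta>/(2x)), so a homogeneous first integral of degree k
   is there a Laurent polynomial in x with coefficients in \<beta>; evaluating at (x, 1, 0) shows that the
   negative powers of x do not occur, and continuity extends the resulting identity to x = 0.  Hence
   \<theta> is a combination of the x^(k-2q) \<beta>^q with 2q \<le> k, and these give \<lceil>d/2\<rceil> independent fields. *)

section \<open>Polynomials in one variable\<close>

lemma sum_powers_collect:
  fixes C :: "'a \<Rightarrow> 'b::comm_semiring_1"
  assumes "finite I" and "\<And>t. t \<in> I \<Longrightarrow> e t \<le> n"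
  shows "(\<Sum>t\<in>I. C t * x^e t) = (\<Sum>m\<le>n. (\<Sum>t | t \<in> I \<and> e t = m. C t) * x^m)"
proof -
  have "(\<Sum>m\<le>n. (\<Sum>t | t \<in> I \<and> e t = m. C t) * x^m)
      = (\<Sum>m\<le>n. \<Sum>t\<in>I. if e t = m then C t * x^m else 0)"
    using assms(1) by (auto simp: sum_distrib_right sum.inter_filter intro!: sum.cong)
  also have "\<dots> = (\<Sum>t\<in>I. C t * x^e t)"
    using assms(2) by (subst sum.swap) simp
  finally show ?thesis ..
qed

lemma sum_powers_eq_on_nonzero_imp_coeffs_eq:
  fixes C :: "'a \<Rightarrow> real" and D :: "'b \<Rightarrow> real"
  assumes "finite I" "finite J"
    and eq: "\<And>x. x \<noteq> 0 \<Longrightarrow> (\<Sum>t\<in>I. C t * x^e t) = (\<Sum>t\<in>J. D t * x^f t)"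
  shows "(\<Sum>t | t \<in> I \<and> e t = m. C t) = (\<Sum>t | t \<in> J \<and> f t = m. D t)"
proof -
  define n where "n = Max (e ` I \<union> f ` J \<union> {m})"
  have bI: "\<And>t. t \<in> I \<Longrightarrow> e t \<le> n" and bJ: "\<And>t. t \<in> J \<Longrightarrow> f t \<le> n" and "m \<le> n"
    unfolding n_def using assms(1,2) by (auto intro: Max_ge)
  define a where "a i = (\<Sum>t | t \<in> I \<and> e t = i. C t) - (\<Sum>t | t \<in> J \<and> f t = i. D t)" for i
  have "(\<Sum>i\<le>n. a i * x^i) = 0" if "x \<noteq> 0" for x
  proof -
    have "(\<Sum>i\<le>n. a i * x^i) = (\<Sum>t\<in>I. C t * x^e t) - (\<Sum>t\<in>J. D t * x^f t)"
      using sum_powers_collect[OF assms(1) bI, where C = C and x = x]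
        sum_powers_collect[OF assms(2) bJ, where C = D and x = x]
      by (simp add: a_def left_diff_distrib sum_subtractf)
    with eq[OF that] show ?thesis by simp
  qed
  then have "- {0} \<subseteq> {x::real. (\<Sum>i\<le>n. a i * x^i) = 0}" by blast
  moreover have "infinite (- {0::real})"
    by (simp add: infinite_UNIV_char_0 Compl_eq_Diff_UNIV)
  ultimately have "\<not> (\<exists>i\<le>n. a i \<noteq> 0)"
    using polyfun_finite_roots[of a n] finite_subset by blast
  with \<open>m \<le> n\<close> show ?thesis by (simp add: a_def)
qed

section \<open>Homogeneous polynomials\<close>

lemma finite_degree_pairs [simp]: "finite {(i::nat, j::nat). i + j \<le> k}"
  by (rule finite_subset[of _ "{..k} \<times> {..k}"]) auto

definition hom_poly :: "nat \<Rightarrow> (nat \<Rightarrow> nat \<Rightarrow> real) \<Rightarrow> real^3 \<Rightarrow> real" where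
  "hom_poly k c \<xi> = (\<Sum>(i, j)\<in>{(i, j). i + j \<le> k}. c i j * (\<xi>$1)^i * (\<xi>$2)^j * (\<xi>$3)^(k - i - j))"

lemma hpoly_iff_hom_poly: "\<theta> \<in> hpoly k \<longleftrightarrow> (\<exists>c. \<theta> = hom_poly k c)"
  by (auto simp: hpoly_def hom_poly_def fun_eq_iff)

lemma differentiable_hom_poly: "hom_poly k c differentiable (at \<xi>)"
  unfolding hom_poly_def[abs_def]
  by (auto simp: case_prod_beta bounded_linear_imp_differentiable bounded_linear_vec_nth
           intro!: differentiable_sum differentiable_mult differentiable_power)

lemma hpoly_differentiable: "\<theta> \<in> hpoly k \<Longrightarrow> \<theta> differentiable (at \<xi>)"
  by (auto simp: hpoly_iff_hom_poly differentiable_hom_poly)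

lemma hom_poly_on_y_eq_0:
  assumes "\<xi>$2 = 0"
  shows "hom_poly k c \<xi> = (\<Sum>i\<le>k. c i 0 * (\<xi>$1)^i * (\<xi>$3)^(k - i))"
proof -
  have "hom_poly k c \<xi> = (\<Sum>(i, j)\<in>(\<lambda>i. (i, 0)) ` {..k}. c i j * (\<xi>$1)^i * 0^j * (\<xi>$3)^(k - i - j))"
    unfolding hom_poly_def assms by (rule sum.mono_neutral_right) auto
  also have "\<dots> = (\<Sum>i\<le>k. c i 0 * (\<xi>$1)^i * (\<xi>$3)^(k - i))"
    by (subst sum.reindex) (auto simp: inj_on_def)
  finally show ?thesis .
qed

lemma hpoly_sum_monomials:
  fixes C :: "'a \<Rightarrow> real"
  assumes "finite I" and deg: "\<And>t. t \<in> I \<Longrightarrow> e1 t + e2 t + e3 t = k"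
  shows "(\<lambda>\<xi>. \<Sum>t\<in>I. C t * (\<xi>$1)^e1 t * (\<xi>$2)^e2 t * (\<xi>$3)^e3 t) \<in> hpoly k"
proof -
  let ?S = "{(i, j). i + j \<le> k}"
  define c where "c i j = (\<Sum>t\<in>I. if (e1 t, e2 t) = (i, j) then C t else 0)" for i j
  have "(\<Sum>t\<in>I. C t * x^e1 t * y^e2 t * z^e3 t)
      = (\<Sum>(i, j)\<in>?S. c i j * x^i * y^j * z^(k - i - j))" for x y z :: real
  proof -
    have "(\<Sum>(i, j)\<in>?S. c i j * x^i * y^j * z^(k - i - j))
        = (\<Sum>p\<in>?S. \<Sum>t\<in>I. if (e1 t, e2 t) = p then C t * x^fst p * y^snd p * z^(k - fst p - snd p) else 0)"
      unfolding c_def case_prod_beta sum_distrib_right by (intro sum.cong) auto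
    also have "\<dots> = (\<Sum>t\<in>I. C t * x^e1 t * y^e2 t * z^e3 t)"
    proof (subst sum.swap, rule sum.cong[OF refl])
      fix t assume "t \<in> I"
      with deg have "(e1 t, e2 t) \<in> ?S" and "k - e1 t - e2 t = e3 t" by force+
      then show "(\<Sum>p\<in>?S. if (e1 t, e2 t) = p then C t * x^fst p * y^snd p * z^(k - fst p - snd p) else 0)
          = C t * x^e1 t * y^e2 t * z^e3 t"
        by simp
    qed
    finally show ?thesis by simp
  qed
  then show ?thesis unfolding hpoly_def by blast
qed

lemma hpoly_x_pow_beta_pow:
  assumes "a + 2 * q = k"
  shows "(\<lambda>\<xi>. (\<xi>$1)^a * (beta \<xi>)^q) \<in> hpoly k"
proof -
  have "(\<xi>$1)^a * (beta \<xi>)^q = (\<Sum>r\<le>q. (real (q choose r) * 2^r * (-1)^(q - r))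
           * (\<xi>$1)^(a + r) * (\<xi>$2)^(2 * (q - r)) * (\<xi>$3)^r)" for \<xi> :: "real^3"
  proof -
    have "(\<xi>$1)^a * (beta \<xi>)^q = (\<xi>$1)^a * (2 * \<xi>$3 * \<xi>$1 + (- ((\<xi>$2)^2)))^q"
      by (simp add: beta_def)
    also have "\<dots> = (\<Sum>r\<le>q. (real (q choose r) * 2^r * (-1)^(q - r))
           * (\<xi>$1)^(a + r) * (\<xi>$2)^(2 * (q - r)) * (\<xi>$3)^r)"
      unfolding binomial_ring sum_distrib_left
    proof (rule sum.cong[OF refl])
      fix r
      have "(- ((\<xi>$2)^2))^(q - r) = (-1)^(q - r) * (\<xi>$2)^(2 * (q - r))"
        by (subst power_minus) (simp add: power_mult)
      then show "(\<xi>$1)^a * (real (q choose r) * (2 * \<xi>$3 * \<xi>$1)^r * (- ((\<xi>$2)^2))^(q - r))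
          = real (q choose r) * 2^r * (-1)^(q - r) * (\<xi>$1)^(a + r) * (\<xi>$2)^(2 * (q - r)) * (\<xi>$3)^r"
        by (simp only: power_mult_distrib power_add mult_ac)
    qed
    finally show ?thesis .
  qed
  moreover have "(\<lambda>\<xi>. \<Sum>r\<le>q. (real (q choose r) * 2^r * (-1)^(q - r))
           * (\<xi>$1)^(a + r) * (\<xi>$2)^(2 * (q - r)) * (\<xi>$3)^r) \<in> hpoly k"
    using assms by (intro hpoly_sum_monomials) auto
  ultimately show ?thesis by simp
qed

section \<open>First integrals of linear flows\<close>

definition first_integral :: "real^3^3 \<Rightarrow> (real^3 \<Rightarrow> real) \<Rightarrow> bool" where
  "first_integral A \<theta> \<longleftrightarrow> (\<forall>\<xi>. frechet_derivative \<theta> (at \<xi>) (A *v \<xi>) = 0)"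

definition radial_first_integrals :: "real^3^3 \<Rightarrow> nat \<Rightarrow> (real^3 \<Rightarrow> real^3) set" where
  "radial_first_integrals A k =
     {h. \<exists>\<theta>\<in>hpoly k. first_integral A \<theta> \<and> h = (\<lambda>\<xi>. \<theta> \<xi> *\<^sub>R \<xi>)}"

lemma ad_radial:
  assumes "\<And>\<xi>. \<theta> differentiable (at \<xi>)"
  shows "ad A (\<lambda>\<xi>. \<theta> \<xi> *\<^sub>R \<xi>) = (\<lambda>\<xi>. frechet_derivative \<theta> (at \<xi>) (A *v \<xi>) *\<^sub>R \<xi>)"
proof
  fix \<xi> :: "real^3"
  have "((\<lambda>\<xi>. \<theta> \<xi> *\<^sub>R \<xi>) has_derivative
      (\<lambda>v. \<theta> \<xi> *\<^sub>R v + frechet_derivative \<theta> (at \<xi>) v *\<^sub>R \<xi>)) (at \<xi>)"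
    using has_derivative_scaleR[OF assms[unfolded frechet_derivative_works] has_derivative_ident]
    by simp
  from frechet_derivative_at[OF this, symmetric]
  show "ad A (\<lambda>\<xi>. \<theta> \<xi> *\<^sub>R \<xi>) \<xi> = frechet_derivative \<theta> (at \<xi>) (A *v \<xi>) *\<^sub>R \<xi>"
    unfolding ad_def by (simp add: matrix_vector_mult_scaleR)
qed

lemma ad_radial_eq_0_iff:
  assumes "\<And>\<xi>. \<theta> differentiable (at \<xi>)"
  shows "ad A (\<lambda>\<xi>. \<theta> \<xi> *\<^sub>R \<xi>) = (\<lambda>_. 0) \<longleftrightarrow> first_integral A \<theta>"
proof -
  have "linear (frechet_derivative \<theta> (at \<xi>))" for \<xi>
    using assms frechet_derivative_works has_derivative_linear by blast
  then have "frechet_derivative \<theta> (at 0) (A *v 0) = 0"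
    by (simp add: linear_0)
  then show ?thesis
    unfolding ad_radial[OF assms] first_integral_def fun_eq_iff by (metis scaleR_eq_0_iff)
qed

lemma ad_kernel_inter_U3:
  "{h. ad A h = (\<lambda>_. 0)} \<inter> U3 d = radial_first_integrals A (d - 1)"
proof -
  have "ad A (\<lambda>\<xi>. \<theta> \<xi> *\<^sub>R \<xi>) = (\<lambda>_. 0) \<longleftrightarrow> first_integral A \<theta>"
    if "\<theta> \<in> hpoly (d - 1)" for \<theta>
    using ad_radial_eq_0_iff hpoly_differentiable[OF that] by blast
  then show ?thesis unfolding U3_def radial_first_integrals_def by blast
qed

lemma has_derivative_vec_nth: "((\<lambda>\<xi>::real^'n. \<xi>$i) has_derivative (\<lambda>v. v$i)) (at \<xi>)"
  by (simp add: bounded_linear_imp_has_derivative bounded_linear_vec_nth)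

lemma has_derivative_poly2:
  fixes a :: "nat \<Rightarrow> nat \<Rightarrow> real"
  assumes "(f has_derivative f') (at \<xi>)" and "(g has_derivative g') (at \<xi>)"
  shows "((\<lambda>\<xi>. \<Sum>i\<le>M. \<Sum>j\<le>M. a i j * f \<xi>^i * g \<xi>^j) has_derivative
     (\<lambda>v. \<Sum>i\<le>M. \<Sum>j\<le>M. a i j * (of_nat i * f' v * f \<xi>^(i - 1) * g \<xi>^j
          + f \<xi>^i * (of_nat j * g' v * g \<xi>^(j - 1))))) (at \<xi>)"
proof (intro has_derivative_sum)
  fix i j
  show "((\<lambda>\<xi>. a i j * f \<xi>^i * g \<xi>^j) has_derivative (\<lambda>v. a i j * (of_nat i * f' v * f \<xi>^(i - 1) * g \<xi>^j
          + f \<xi>^i * (of_nat j * g' v * g \<xi>^(j - 1))))) (at \<xi>)"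
    by (rule derivative_eq_intros assms refl)+ (simp add: fun_eq_iff algebra_simps)
qed

lemma first_integral_poly2:
  fixes a :: "nat \<Rightarrow> nat \<Rightarrow> real"
  assumes "\<And>\<xi>. f differentiable (at \<xi>)" "\<And>\<xi>. g differentiable (at \<xi>)"
    and "first_integral A f" "first_integral A g"
  shows "first_integral A (\<lambda>\<xi>. \<Sum>i\<le>M. \<Sum>j\<le>M. a i j * f \<xi>^i * g \<xi>^j)"
  unfolding first_integral_def
proof
  fix \<xi> :: "real^3"
  note has_derivative_poly2[where M = M and a = a,
      OF assms(1,2)[unfolded frechet_derivative_works]]
  from frechet_derivative_at[OF this, symmetric] assms(3,4)
  show "frechet_derivative (\<lambda>\<xi>. \<Sum>i\<le>M. \<Sum>j\<le>M. a i j * f \<xi>^i * g \<xi>^j) (at \<xi>) (A *v \<xi>) = 0"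
    unfolding first_integral_def by simp
qed

lemma first_integral_const_on_orbit:
  assumes nilpotent: "\<And>v. A *v (A *v (A *v v)) = 0"
    and diff: "\<And>\<xi>. \<theta> differentiable (at \<xi>)" and "first_integral A \<theta>"
  shows "\<theta> (\<xi> + t *\<^sub>R (A *v \<xi>) + (t^2 / 2) *\<^sub>R (A *v (A *v \<xi>))) = \<theta> \<xi>"
proof -
  define \<phi> where "\<phi> t = \<xi> + t *\<^sub>R (A *v \<xi>) + (t^2 / 2) *\<^sub>R (A *v (A *v \<xi>))" for t :: real
  have "A *v \<phi> t = A *v \<xi> + t *\<^sub>R (A *v (A *v \<xi>))" for t
    unfolding \<phi>_def by (simp add: matrix_vector_right_distrib matrix_vector_mult_scaleR nilpotent)
  moreover have "(\<phi> has_derivative (\<lambda>h. h *\<^sub>R (A *v \<xi> + t *\<^sub>R (A *v (A *v \<xi>))))) (at t)" for t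
    unfolding \<phi>_def
    by (auto intro!: derivative_eq_intros simp: fun_eq_iff algebra_simps power2_eq_square)
  ultimately have orbit: "(\<phi> has_derivative (\<lambda>h. h *\<^sub>R (A *v \<phi> t))) (at t)" for t
    by simp
  have "DERIV (\<theta> \<circ> \<phi>) t :> 0" for t
  proof -
    have "linear (frechet_derivative \<theta> (at (\<phi> t)))"
      using diff frechet_derivative_works has_derivative_linear by blast
    then have "frechet_derivative \<theta> (at (\<phi> t)) \<circ> (\<lambda>h. h *\<^sub>R (A *v \<phi> t)) = (*) 0"
      using \<open>first_integral A \<theta>\<close> by (auto simp: fun_eq_iff linear_scale first_integral_def)
    with diff_chain_at[OF orbit diff[unfolded frechet_derivative_works]]
    show ?thesis unfolding has_field_derivative_def by metis
  qed
  then have "(\<theta> \<circ> \<phi>) t = (\<theta> \<circ> \<phi>) 0" by (intro DERIV_isconst_all[of "\<theta> \<circ> \<phi>"]) auto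
  then show ?thesis by (simp add: \<phi>_def)
qed

section \<open>First integrals of the flow of the transpose of N\<close>

lemma vector_mult_Nmat_nth [simp]:
  "(v v* Nmat)$1 = 0" "(v v* Nmat)$2 = v$1" "(v v* Nmat)$3 = v$2"
  by (simp_all add: vector_matrix_mult_def Nmat_def sum_3)

lemma transpose_Nmat_cube: "transpose Nmat *v (transpose Nmat *v (transpose Nmat *v v)) = 0"
  by (simp add: vec_eq_iff forall_3)

lemma has_derivative_beta:
  "(beta has_derivative (\<lambda>v. 2 * v$3 * \<xi>$1 + 2 * \<xi>$3 * v$1 - 2 * \<xi>$2 * v$2)) (at \<xi>)"
  unfolding beta_def[abs_def]
  by (rule derivative_eq_intros has_derivative_vec_nth refl)+ (simp add: fun_eq_iff algebra_simps)

lemma first_integral_x_beta_poly2: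
  "first_integral (transpose Nmat) (\<lambda>\<xi>. \<Sum>i\<le>M. \<Sum>j\<le>M. a i j * (\<xi>$1)^i * (beta \<xi>)^j)"
proof (rule first_integral_poly2)
  show "first_integral (transpose Nmat) (\<lambda>\<xi>. \<xi>$1)" "first_integral (transpose Nmat) beta"
    by (simp_all add: first_integral_def frechet_derivative_at[OF has_derivative_vec_nth, symmetric]
        frechet_derivative_at[OF has_derivative_beta, symmetric])
qed (use has_derivative_vec_nth has_derivative_beta differentiableI in blast)+

(* For x \<noteq> 0 the orbit of \<xi> reaches the plane y = 0 at time t = -y/x, in the point (x, 0, \<beta>/(2x)). *)
lemma first_integral_hom_poly_on_slice:
  assumes "first_integral (transpose Nmat) (hom_poly k c)" and "\<xi>$1 \<noteq> 0"
  shows "hom_poly k c \<xi> = (\<Sum>i\<le>k. c i 0 * (\<xi>$1)^i * (beta \<xi> / (2 * \<xi>$1))^(k - i))"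
proof -
  define t where "t = - \<xi>$2 / \<xi>$1"
  define \<psi> where "\<psi> = \<xi> + t *\<^sub>R (transpose Nmat *v \<xi>)
      + (t^2 / 2) *\<^sub>R (transpose Nmat *v (transpose Nmat *v \<xi>))"
  have "hom_poly k c \<psi> = hom_poly k c \<xi>"
    unfolding \<psi>_def
    by (rule first_integral_const_on_orbit[OF transpose_Nmat_cube _ assms(1)])
       (rule differentiable_hom_poly)
  moreover have "\<psi>$1 = \<xi>$1" "\<psi>$2 = 0" "\<psi>$3 = beta \<xi> / (2 * \<xi>$1)"
    using assms(2) unfolding \<psi>_def t_def beta_def by (simp_all add: field_simps power2_eq_square)
  ultimately show ?thesis using hom_poly_on_y_eq_0 by metis
qed

(* At (x, 1, 0) the value of the polynomial is a polynomial in x, while the orbit formula gives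
   c i 0 (-1/2)^(k-i) x^(2i-k); after multiplying by x^k the coefficients of x^(2i) with 2i < k
   must vanish. *)
lemma first_integral_hom_poly_coeff_eq_0:
  assumes "first_integral (transpose Nmat) (hom_poly k c)" and "2 * i0 < k"
  shows "c i0 0 = 0"
proof -
  let ?S = "{(i, j). i + j \<le> k}"
  have identity: "(\<Sum>p\<in>?S. (c (fst p) (snd p) * 0^(k - fst p - snd p)) * x^(fst p + k))
      = (\<Sum>i\<le>k. (c i 0 * (-1/2)^(k - i)) * x^(2 * i))" if "x \<noteq> 0" for x :: real
  proof -
    define \<xi> :: "real^3" where "\<xi> = (\<chi> i. if i = 1 then x else if i = 2 then 1 else 0)"
    have v: "\<xi>$1 = x" "\<xi>$2 = 1" "\<xi>$3 = 0" "beta \<xi> = -1"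
      unfolding \<xi>_def beta_def by simp_all
    have "(\<Sum>p\<in>?S. (c (fst p) (snd p) * 0^(k - fst p - snd p)) * x^(fst p + k))
        = x^k * hom_poly k c \<xi>"
      by (simp add: hom_poly_def v sum_distrib_left case_prod_beta power_add algebra_simps)
    also have "\<dots> = x^k * (\<Sum>i\<le>k. c i 0 * x^i * (-1 / (2 * x))^(k - i))"
      using first_integral_hom_poly_on_slice[OF assms(1), of \<xi>] v that by simp
    also have "\<dots> = (\<Sum>i\<le>k. (c i 0 * (-1/2)^(k - i)) * x^(2 * i))"
      unfolding sum_distrib_left
    proof (rule sum.cong[OF refl])
      fix i assume "i \<in> {..k}"
      then have k: "x^k = x^(k - i) * x^i" by (simp flip: power_add)
      have twice: "x^(2 * i) = x^i * x^i" by (simp add: mult_2 power_add)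
      have "x^(k - i) * (-1 / (2 * x))^(k - i) = (-1/2)^(k - i)"
        using that by (simp flip: power_mult_distrib)
      then show "x^k * (c i 0 * x^i * (-1 / (2 * x))^(k - i))
          = c i 0 * (-1/2)^(k - i) * x^(2 * i)"
        unfolding k twice by (simp add: algebra_simps)
    qed
    finally show ?thesis .
  qed
  have "{p. p \<in> ?S \<and> fst p + k = 2 * i0} = {}" "{i. i \<in> {..k} \<and> 2 * i = 2 * i0} = {i0}"
    using assms(2) by auto
  from sum_powers_eq_on_nonzero_imp_coeffs_eq[where C = "\<lambda>p. c (fst p) (snd p) * 0^(k - fst p - snd p)"
      and e = "\<lambda>p. fst p + k" and D = "\<lambda>i. c i 0 * (-1/2)^(k - i)" and f = "\<lambda>i. 2 * i",
      OF _ _ identity, of "2 * i0", unfolded this]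
  show ?thesis by simp
qed

lemma finite_Collect_double_le [simp]: "finite {q::nat. 2 * q \<le> k}"
  by (rule finite_subset[of _ "{..k}"]) auto

definition x_beta_poly :: "nat \<Rightarrow> (nat \<Rightarrow> real) \<Rightarrow> real^3 \<Rightarrow> real" where
  "x_beta_poly k \<alpha> \<xi> = (\<Sum>q | 2 * q \<le> k. \<alpha> q * (\<xi>$1)^(k - 2 * q) * (beta \<xi>)^q)"

lemma first_integral_hom_poly_eq_x_beta_poly_off_hyperplane:
  assumes "first_integral (transpose Nmat) (hom_poly k c)" and "\<xi>$1 \<noteq> 0"
  shows "hom_poly k c \<xi> = x_beta_poly k (\<lambda>q. c (k - q) 0 / 2^q) \<xi>"
proof -
  let ?x = "\<xi>$1" and ?\<beta> = "beta \<xi>"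
  have "hom_poly k c \<xi> = (\<Sum>i\<le>k. c i 0 * ?x^i * (?\<beta> / (2 * ?x))^(k - i))"
    by (rule first_integral_hom_poly_on_slice[OF assms])
  also have "\<dots> = (\<Sum>q\<le>k. c (k - q) 0 * ?x^(k - q) * (?\<beta> / (2 * ?x))^q)"
    unfolding atMost_atLeast0 by (subst sum.atLeastAtMost_rev) simp
  also have "\<dots> = (\<Sum>q | 2 * q \<le> k. c (k - q) 0 * ?x^(k - q) * (?\<beta> / (2 * ?x))^q)"
  proof (rule sum.mono_neutral_right)
    show "\<forall>q\<in>{..k} - {q. 2 * q \<le> k}. c (k - q) 0 * ?x^(k - q) * (?\<beta> / (2 * ?x))^q = 0"
      using first_integral_hom_poly_coeff_eq_0[OF assms(1)] by auto
  qed auto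
  also have "\<dots> = x_beta_poly k (\<lambda>q. c (k - q) 0 / 2^q) \<xi>"
    unfolding x_beta_poly_def
  proof (rule sum.cong[OF refl])
    fix q assume "q \<in> {q. 2 * q \<le> k}"
    then have "?x^(k - q) = ?x^(k - 2 * q) * ?x^q" by (simp flip: power_add)
    then show "c (k - q) 0 * ?x^(k - q) * (?\<beta> / (2 * ?x))^q
        = c (k - q) 0 / 2^q * ?x^(k - 2 * q) * ?\<beta>^q"
      using assms(2) by (simp add: field_simps)
  qed
  finally show ?thesis .
qed

lemma continuous_eq_off_coordinate_hyperplane:
  fixes f g :: "real^'n \<Rightarrow> 'b::real_normed_vector"
  assumes "continuous_on UNIV f" "continuous_on UNIV g" and "\<And>\<xi>. \<xi>$i \<noteq> 0 \<Longrightarrow> f \<xi> = g \<xi>"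
  shows "f = g"
proof
  fix \<xi>
  have "closure {\<xi>::real^'n. \<xi>$i \<noteq> 0} = closure (- {\<xi>. \<xi>$i = 0})"
    by (rule arg_cong[where f = closure]) auto
  also have "\<dots> = UNIV"
    by (simp only: closure_complement interior_standard_hyperplane) simp
  finally show "f \<xi> = g \<xi>"
    using continuous_constant_on_closure[of "{\<xi>. \<xi>$i \<noteq> 0}" "\<lambda>\<xi>. f \<xi> - g \<xi>" 0 \<xi>] assms
    by (auto intro: continuous_on_diff)
qed

lemma first_integral_hom_poly_eq_x_beta_poly:
  assumes "first_integral (transpose Nmat) (hom_poly k c)"
  shows "hom_poly k c = x_beta_poly k (\<lambda>q. c (k - q) 0 / 2^q)"
proof (rule continuous_eq_off_coordinate_hyperplane)
  show "continuous_on UNIV (hom_poly k c)"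
    using differentiable_hom_poly
    by (meson differentiable_at_imp_differentiable_on differentiable_imp_continuous_on)
  show "continuous_on UNIV (x_beta_poly k (\<lambda>q. c (k - q) 0 / 2^q))"
    unfolding x_beta_poly_def[abs_def] beta_def by (intro continuous_intros)
qed (rule first_integral_hom_poly_eq_x_beta_poly_off_hyperplane[OF assms])

lemma x_beta_poly_eq_poly2:
  "x_beta_poly k \<alpha> \<xi> = (\<Sum>i\<le>k. \<Sum>j\<le>k. (if i + 2 * j = k then \<alpha> j else 0) * (\<xi>$1)^i * (beta \<xi>)^j)"
proof -
  have "(\<Sum>i\<le>k. \<Sum>j\<le>k. (if i + 2 * j = k then \<alpha> j else 0) * (\<xi>$1)^i * (beta \<xi>)^j)
      = (\<Sum>j\<le>k. \<Sum>i\<le>k. if i = k - 2 * j \<and> 2 * j \<le> k then \<alpha> j * (\<xi>$1)^i * (beta \<xi>)^j else 0)"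
    by (subst sum.swap) (auto intro!: sum.cong)
  also have "\<dots> = (\<Sum>j\<le>k. if 2 * j \<le> k then \<alpha> j * (\<xi>$1)^(k - 2 * j) * (beta \<xi>)^j else 0)"
    by (auto intro!: sum.cong)
  also have "\<dots> = x_beta_poly k \<alpha> \<xi>"
    unfolding x_beta_poly_def by (subst sum.inter_filter[symmetric]) (auto intro!: sum.cong)
  finally show ?thesis ..
qed

lemma first_integral_x_beta_poly: "first_integral (transpose Nmat) (x_beta_poly k \<alpha>)"
  using first_integral_x_beta_poly2 by (simp add: x_beta_poly_eq_poly2[abs_def])

lemma first_integral_hpoly_iff_poly_x_beta:
  assumes "\<theta> \<in> hpoly k"
  shows "first_integral (transpose Nmat) \<theta> \<longleftrightarrow>
    (\<exists>M a. \<forall>\<xi>. \<theta> \<xi> = (\<Sum>i\<le>M. \<Sum>j\<le>M. a i j * (\<xi>$1)^i * (beta \<xi>)^j))"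
proof
  assume "first_integral (transpose Nmat) \<theta>"
  moreover obtain c where "\<theta> = hom_poly k c" using assms hpoly_iff_hom_poly by blast
  ultimately have "\<theta> = x_beta_poly k (\<lambda>q. c (k - q) 0 / 2^q)"
    using first_integral_hom_poly_eq_x_beta_poly by simp
  then show "\<exists>M a. \<forall>\<xi>. \<theta> \<xi> = (\<Sum>i\<le>M. \<Sum>j\<le>M. a i j * (\<xi>$1)^i * (beta \<xi>)^j)"
    by (auto simp: x_beta_poly_eq_poly2)
next
  assume "\<exists>M a. \<forall>\<xi>. \<theta> \<xi> = (\<Sum>i\<le>M. \<Sum>j\<le>M. a i j * (\<xi>$1)^i * (beta \<xi>)^j)"
  then obtain M a where "\<theta> = (\<lambda>\<xi>. \<Sum>i\<le>M. \<Sum>j\<le>M. a i j * (\<xi>$1)^i * (beta \<xi>)^j)" by blast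
  then show "first_integral (transpose Nmat) \<theta>" using first_integral_x_beta_poly2 by simp
qed

section \<open>Dimension of the kernel\<close>

lemma sum_fun_apply: "(\<Sum>i\<in>A. f i) x = (\<Sum>i\<in>A. f i x)"
  by (induction A rule: infinite_finite_induct) auto

interpretation vf: vector_space vf_scale
  by unfold_locales (auto simp: vf_scale_def fun_eq_iff algebra_simps)

definition x_beta_field :: "nat \<Rightarrow> nat \<Rightarrow> real^3 \<Rightarrow> real^3" where
  "x_beta_field k q \<xi> = ((\<xi>$1)^(k - 2 * q) * (beta \<xi>)^q) *\<^sub>R \<xi>"

lemma x_beta_field_mem_radial_first_integrals:
  assumes "2 * q \<le> k"
  shows "x_beta_field k q \<in> radial_first_integrals (transpose Nmat) k"
proof -
  have "x_beta_poly k (\<lambda>p. if p = q then 1 else 0) \<xi>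
      = (\<Sum>p | 2 * p \<le> k. if p = q then (\<xi>$1)^(k - 2 * p) * (beta \<xi>)^p else 0)" for \<xi>
    unfolding x_beta_poly_def by (intro sum.cong) auto
  then have "x_beta_poly k (\<lambda>p. if p = q then 1 else 0) = (\<lambda>\<xi>. (\<xi>$1)^(k - 2 * q) * (beta \<xi>)^q)"
    using assms by (simp add: fun_eq_iff)
  then have "first_integral (transpose Nmat) (\<lambda>\<xi>. (\<xi>$1)^(k - 2 * q) * (beta \<xi>)^q)"
    using first_integral_x_beta_poly by metis
  moreover have "(\<lambda>\<xi>. (\<xi>$1)^(k - 2 * q) * (beta \<xi>)^q) \<in> hpoly k"
    using assms by (intro hpoly_x_pow_beta_pow) simp
  ultimately show ?thesis
    unfolding radial_first_integrals_def x_beta_field_def[abs_def] by blast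
qed

lemma radial_first_integrals_subset_span:
  "radial_first_integrals (transpose Nmat) k \<subseteq> vf.span (x_beta_field k ` {q. 2 * q \<le> k})"
proof
  fix h assume "h \<in> radial_first_integrals (transpose Nmat) k"
  then obtain \<theta> where "\<theta> \<in> hpoly k" "first_integral (transpose Nmat) \<theta>"
    and h: "h = (\<lambda>\<xi>. \<theta> \<xi> *\<^sub>R \<xi>)"
    unfolding radial_first_integrals_def by blast
  moreover obtain c where "\<theta> = hom_poly k c" using \<open>\<theta> \<in> hpoly k\<close> hpoly_iff_hom_poly by blast
  ultimately have "h = (\<lambda>\<xi>. x_beta_poly k (\<lambda>q. c (k - q) 0 / 2^q) \<xi> *\<^sub>R \<xi>)"
    using first_integral_hom_poly_eq_x_beta_poly by simp
  also have "\<dots> = (\<Sum>q | 2 * q \<le> k. vf_scale (c (k - q) 0 / 2^q) (x_beta_field k q))"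
    by (simp add: fun_eq_iff sum_fun_apply x_beta_poly_def x_beta_field_def vf_scale_def
        scaleR_sum_left mult.assoc)
  also have "\<dots> \<in> vf.span (x_beta_field k ` {q. 2 * q \<le> k})"
    by (intro vf.span_sum vf.span_scale vf.span_base) auto
  finally show "h \<in> vf.span (x_beta_field k ` {q. 2 * q \<le> k})" .
qed

lemma x_beta_field_at_slice:
  "x_beta_field k q (\<chi> i. if i = 1 then 1 else if i = 2 then 0 else z) $ 1 = (2 * z)^q"
  by (simp add: x_beta_field_def beta_def)

lemma inj_on_x_beta_field: "inj_on (x_beta_field k) {q. 2 * q \<le> k}"
proof
  fix q q' assume "x_beta_field k q = x_beta_field k q'"
  then have "(2 * 1 :: real)^q = (2 * 1)^q'"
    using x_beta_field_at_slice[of k _ 1] by metis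
  then show "q = q'" by simp
qed

(* At (1, 0, z) the first component of the q-th field is (2z)^q, so a linear relation among the
   fields is a vanishing polynomial in z. *)
lemma independent_x_beta_fields: "vf.independent (x_beta_field k ` {q. 2 * q \<le> k})"
proof -
  let ?Q = "{q. 2 * q \<le> k}"
  have "u v = 0"
    if rel: "(\<Sum>v\<in>x_beta_field k ` ?Q. vf_scale (u v) v) = 0" and "v \<in> x_beta_field k ` ?Q" for u v
  proof -
    obtain q where "q \<in> ?Q" "v = x_beta_field k q" using \<open>v \<in> x_beta_field k ` ?Q\<close> by blast
    have "(\<Sum>p\<le>k. (if p \<in> ?Q then u (x_beta_field k p) * 2^p else 0) * z^p) = 0" for z :: real
    proof -
      have "0 = (\<Sum>p\<in>?Q. vf_scale (u (x_beta_field k p)) (x_beta_field k p))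
          (\<chi> i. if i = 1 then 1 else if i = 2 then 0 else z) $ 1"
        using rel by (simp add: sum.reindex[OF inj_on_x_beta_field])
      also have "\<dots> = (\<Sum>p\<in>?Q. u (x_beta_field k p) * (2 * z)^p)"
        by (simp add: sum_fun_apply vf_scale_def x_beta_field_at_slice)
      also have "\<dots> = (\<Sum>p\<le>k. (if p \<in> ?Q then u (x_beta_field k p) * 2^p else 0) * z^p)"
        by (rule sum.mono_neutral_cong_left) (auto simp: power_mult_distrib)
      finally show ?thesis by simp
    qed
    then have "\<forall>p\<le>k. (if p \<in> ?Q then u (x_beta_field k p) * 2^p else 0) = 0"
      using polyfun_eq_0[where c = "\<lambda>p. if p \<in> ?Q then u (x_beta_field k p) * 2^p else 0" and n = k]
      by blast
    with \<open>q \<in> ?Q\<close> \<open>v = x_beta_field k q\<close> show ?thesis by (auto dest!: spec[of _ q])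
  qed
  then show ?thesis
    unfolding vf.dependent_finite[OF finite_imageI[OF finite_Collect_double_le]] by blast
qed

lemma dim_radial_first_integrals:
  "vf.dim (radial_first_integrals (transpose Nmat) k) = k div 2 + 1"
proof -
  let ?B = "x_beta_field k ` {q. 2 * q \<le> k}"
  have "?B \<subseteq> radial_first_integrals (transpose Nmat) k"
    using x_beta_field_mem_radial_first_integrals by blast
  then have "vf.span ?B = vf.span (radial_first_integrals (transpose Nmat) k)"
    using vf.span_mono vf.span_minimal[OF radial_first_integrals_subset_span vf.subspace_span]
    by (intro equalityI) auto
  then have "vf.dim (radial_first_integrals (transpose Nmat) k) = card ?B"
    by (rule vf.dim_eq_card[OF _ independent_x_beta_fields])
  also have "\<dots> = card {q. 2 * q \<le> k}"
    by (rule card_image[OF inj_on_x_beta_field])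
  also have "\<dots> = card {..k div 2}"
    by (rule arg_cong[where f = card]) auto
  finally show ?thesis by simp
qed

lemma nat_ceiling_half: "d \<ge> 1 \<Longrightarrow> nat \<lceil>real d / 2\<rceil> = (d - 1) div 2 + 1"
proof -
  assume "d \<ge> 1"
  then have "d = 2 * ((d - 1) div 2) + 1 \<or> d = 2 * ((d - 1) div 2) + 2" by presburger
  then have "\<lceil>real d / 2\<rceil> = int ((d - 1) div 2) + 1" by (intro ceiling_unique) auto
  then show ?thesis by simp
qed

theorem lemma9:
  fixes d :: nat
  assumes "d \<ge> 1"
  shows "{h. ad (transpose Nmat) h = (\<lambda>_. 0)} \<inter> U3 d =
           {h. \<exists>\<theta>\<in>hpoly (d - 1).
                 (\<exists>(M::nat) (a::nat \<Rightarrow> nat \<Rightarrow> real). \<forall>\<xi>.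
                    \<theta> \<xi> = (\<Sum>i\<le>M. \<Sum>j\<le>M. a i j * (\<xi>$1)^i * (beta \<xi>)^j))
               \<and> h = (\<lambda>\<xi>. \<theta> \<xi> *\<^sub>R \<xi>)}
       \<and> vector_space.dim vf_scale ({h. ad (transpose Nmat) h = (\<lambda>_. 0)} \<inter> U3 d)
           = nat \<lceil>real d / 2\<rceil>"
  unfolding ad_kernel_inter_U3 dim_radial_first_integrals nat_ceiling_half[OF assms]
  using first_integral_hpoly_iff_poly_x_beta by (auto simp: radial_first_integrals_def)

end
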